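(* Let $N\ge 2$, let $D_1^N,\ldots,D_N^N:\mathbb{R}_+^N\to\mathbb{R}$ satisfy (A1)–(A3) below, and let the lower-level demand functions $D^n_i$ ($1\le n\le N-1$, $1\le i\le n$) be defined by the consistency recursion below and satisfy (A4). Then for each $n$ the functions $D_i^n$, $i=1,\ldots,n$, are smooth in all variables and satisfy $\partial D_i^n/\partial p_j>0$ for $j\ne i$; they inherit the exchangeability property (A2) (with $N$ replaced by $n$); and for every price vector $p$ with $p_1\le p_2\le\cdots\le p_N$ and every $1\le n\le N$, $$D_1^n(p_1,\ldots,p_n)\ge D_2^n(p_1,\ldots,p_n)\ge\cdots\ge D_n^n(p_1,\ldots,p_n).$$
   Context: (A1) Each $D_i^N$ is smooth, $D_N^N(0,\ldots,0)>0$, $\partial D_i^N/\partial p_i<0$, and $\partial D_i^N/\partial p_j>0$ for $j\ne i$. (A2) Exchangeability: $D_i^N(p_1,\ldots,p_i,\ldots,p_j,\ldots,p_N)=D_j^N(p_1,\ldots,p_j,\ldots,p_i,\ldots,p_N)$ for all $i,j$ (entries $i,j$ swapped), hence $D_i^N$ is invariant under permutations of the other firms' prices. (A3) For every $i$ and every vector of the other prices there is a finite choke price at which $D_i^N=0$. Consistency recursion: for $n=N-1,\ldots,1$, $D_i^n(p_1,\ldots,p_n)=D_i^{n+1}(p_1,\ldots,p_n,\hat p_{n+1})$ for $i\le n$, where $\hat p_{n+1}(p_1,\ldots,p_n)$ is the (finite) price with $D^{n+1}_{n+1}(p_1,\ldots,p_n,\hat p_{n+1})=0$. (A4) $\partial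 D^n_i/\partial p_i<0$ for all $n\le N-1$ and $i\le n$. *)

theory Defs
  imports "HOL-Analysis.Analysis"
begin

text \<open>Price vectors of n firms are encoded as functions nat => real whose
  coordinates 1..n are the prices and which vanish outside {1..n}.\<close>

definition orthant :: "nat \<Rightarrow> (nat \<Rightarrow> real) set" where
  "orthant n = {p. (\<forall>j\<in>{1..n}. 0 \<le> p j) \<and> (\<forall>j. j \<notin> {1..n} \<longrightarrow> p j = 0)}"

definition restr :: "nat \<Rightarrow> (nat \<Rightarrow> real) \<Rightarrow> (nat \<Rightarrow> real)" where
  "restr n p = (\<lambda>j. if j \<in> {1..n} then p j else 0)"

text \<open>d is the partial derivative of f with respect to the j-th variable at p,
  relative to the domain S (one-sided on the boundary of the orthant).\<close>

definition has_partial ::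
  "((nat \<Rightarrow> real) \<Rightarrow> real) \<Rightarrow> nat \<Rightarrow> real \<Rightarrow> (nat \<Rightarrow> real) \<Rightarrow> (nat \<Rightarrow> real) set \<Rightarrow> bool" where
  "has_partial f j d p S \<longleftrightarrow>
     ((\<lambda>t. f (p(j := t))) has_real_derivative d) (at (p j) within {t. p(j := t) \<in> S})"

definition smooth_on_orthant :: "nat \<Rightarrow> ((nat \<Rightarrow> real) \<Rightarrow> real) \<Rightarrow> bool" where
  "smooth_on_orthant n f \<longleftrightarrow>
     (\<exists>F :: nat list \<Rightarrow> (nat \<Rightarrow> real) \<Rightarrow> real.
        (\<forall>p\<in>orthant n. F [] p = f p) \<and>
        (\<forall>js. set js \<subseteq> {1..n} \<longrightarrow>
           continuous_on (orthant n) (F js) \<and>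
           (\<forall>j\<in>{1..n}. \<forall>p\<in>orthant n. has_partial (F js) j (F (j # js) p) p (orthant n))))"

end

theory Submission
  imports Defs
begin

text \<open>Going down from N firms, the level-n demands are the level-(n+1) demands
  evaluated at the choke price of firm n+1, the unique zero of the strictly decreasing
  map t \<mapsto> D^{n+1}_{n+1}(p, t). The implicit function argument is carried out by hand:
  the choke price is continuous by a sign argument and differentiable by the mean value
  theorem with slope -H_j/H_{n+1}, and smoothness is characterised coinductively as
  membership in a class of continuous functions closed under partial differentiation.
  The chain rule G_j - G_{n+1} H_j/H_{n+1} then gives positive cross partials,
  uniqueness of the choke price gives exchangeability, and for ordered prices the
  demand of firm i+1 equals that of firm i with the two prices swapped, which can only
  decrease it since D_i falls in p_i and rises in p_{i+1}.\<close>

lemma orthant_upd_iff: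
  assumes "p \<in> orthant n" "j \<in> {1..n}"
  shows "p(j := t) \<in> orthant n \<longleftrightarrow> t \<ge> 0"
  using assms unfolding orthant_def by auto

lemma orthant_nonneg: "p \<in> orthant n \<Longrightarrow> j \<in> {1..n} \<Longrightarrow> p j \<ge> 0"
  unfolding orthant_def by auto

lemma orthant_extend: "p \<in> orthant n \<Longrightarrow> t \<ge> 0 \<Longrightarrow> p(Suc n := t) \<in> orthant (Suc n)"
  unfolding orthant_def by auto

lemma orthant_upd_extend:
  "p \<in> orthant n \<Longrightarrow> j \<in> {1..n} \<Longrightarrow> s \<ge> 0 \<Longrightarrow> t \<ge> 0 \<Longrightarrow> p(j := s, Suc n := t) \<in> orthant (Suc n)"
  using orthant_extend orthant_upd_iff by blast

lemma orthant_swap: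
  "p \<in> orthant n \<Longrightarrow> i \<in> {1..n} \<Longrightarrow> j \<in> {1..n} \<Longrightarrow> p(i := p j, j := p i) \<in> orthant n"
  unfolding orthant_def by auto

lemma restr_in_orthant: "p \<in> orthant N \<Longrightarrow> restr n p \<in> orthant n"
  unfolding orthant_def restr_def by auto

lemma has_partial_orthant_iff:
  assumes "p \<in> orthant n" "j \<in> {1..n}"
  shows "has_partial f j d p (orthant n) \<longleftrightarrow>
    ((\<lambda>t. f (p(j := t))) has_real_derivative d) (at (p j) within {0..})"
proof -
  have "{t. p(j := t) \<in> orthant n} = {0..}"
    using orthant_upd_iff[OF assms] by auto
  then show ?thesis
    unfolding has_partial_def by simp
qed

lemma has_partial_cong:
  assumes "\<forall>x\<in>S. f x = g x" "p \<in> S" "has_partial f j d p S"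
  shows "has_partial g j d p S"
  using assms(3) unfolding has_partial_def
  by (rule has_field_derivative_transform_within[where d = 1]) (use assms(1,2) in auto)

lemma has_partial_orthant_unique:
  assumes "p \<in> orthant n" "j \<in> {1..n}"
    and "has_partial f j d1 p (orthant n)" "has_partial f j d2 p (orthant n)"
  shows "d1 = d2"
proof -
  have "at_right (p j) \<le> at (p j) within {0..}"
    by (rule at_le) (use orthant_nonneg[OF assms(1,2)] in auto)
  then have "at (p j) within {0..} \<noteq> bot"
    using trivial_limit_at_right_real by (auto simp: bot_unique)
  then show ?thesis
    using assms(3,4) tendsto_unique
    unfolding has_partial_orthant_iff[OF assms(1,2)] has_field_derivative_iff by blast
qed

lemma has_partial_const: "has_partial (\<lambda>_. c) j 0 p S"
  unfolding has_partial_def by (rule DERIV_const)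

lemma has_partial_add:
  "has_partial f j a p S \<Longrightarrow> has_partial g j b p S \<Longrightarrow> has_partial (\<lambda>x. f x + g x) j (a + b) p S"
  unfolding has_partial_def by (rule DERIV_add)

lemma has_partial_mult:
  assumes "has_partial f j a p S" "has_partial g j b p S"
  shows "has_partial (\<lambda>x. f x * g x) j (a * g p + f p * b) p S"
  using DERIV_mult[OF assms[unfolded has_partial_def]]
  unfolding has_partial_def by (simp add: mult.commute)

lemma has_partial_divide_power:
  assumes "has_partial g j a p S" "has_partial f j b p S" "f p \<noteq> 0"
  shows "has_partial (\<lambda>x. g x / f x ^ k) j ((a * f p - real k * g p * b) / f p ^ Suc k) p S"
proof -
  have "((\<lambda>t. f (p(j := t)) ^ k) has_real_derivative real k * b * f p ^ (k - 1))
      (at (p j) within {t. p(j := t) \<in> S})"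
    using DERIV_power[OF assms(2)[unfolded has_partial_def], of k] by (simp add: mult.assoc)
  from DERIV_divide[OF assms(1)[unfolded has_partial_def] this] assms(3)
  have "((\<lambda>t. g (p(j := t)) / f (p(j := t)) ^ k) has_real_derivative
      (a * f p ^ k - g p * (real k * b * f p ^ (k - 1))) / (f p ^ k * f p ^ k))
      (at (p j) within {t. p(j := t) \<in> S})"
    by simp
  moreover have "(a * f p ^ k - g p * (real k * b * f p ^ (k - 1))) / (f p ^ k * f p ^ k)
      = (a * f p - real k * g p * b) / f p ^ Suc k"
    using assms(3) by (cases k) (simp_all add: field_simps power_add[symmetric])
  ultimately show ?thesis
    unfolding has_partial_def by simp
qed

subsection \<open>Monotonicity along a coordinate\<close>

lemma at_within_nonneg_eq_at: "(x::real) > 0 \<Longrightarrow> at x within {0..} = at x"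
  by (rule at_within_open_subset[of _ "{0<..}"]) auto

lemma mvt_nonneg_halfline:
  fixes g :: "real \<Rightarrow> real"
  assumes deriv: "\<And>t. t \<ge> 0 \<Longrightarrow> (g has_real_derivative g' t) (at t within {0..})"
    and ab: "0 \<le> a" "a < b"
  shows "\<exists>z. a < z \<and> z < b \<and> g b - g a = g' z * (b - a)"
proof -
  have "continuous_on {0..} g"
    unfolding continuous_on_eq_continuous_within using deriv DERIV_continuous by blast
  then have cont: "continuous_on {a..b} g"
    by (rule continuous_on_subset) (use ab in auto)
  have interior: "(g has_real_derivative g' x) (at x)" if "a < x" for x
    using deriv[of x] that ab at_within_nonneg_eq_at[of x] by auto
  obtain l z where z: "a < z" "z < b" "DERIV g z :> l" "g b - g a = (b - a) * l"
    using MVT[OF ab(2) cont] interior real_differentiable_def by blast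
  then have "l = g' z"
    using interior DERIV_unique by blast
  with z show ?thesis
    by (auto simp: mult.commute)
qed

lemma mvt_nonneg_halfline_between:
  fixes g :: "real \<Rightarrow> real"
  assumes deriv: "\<And>t. t \<ge> 0 \<Longrightarrow> (g has_real_derivative g' t) (at t within {0..})"
    and "0 \<le> a" "0 \<le> b"
  shows "\<exists>z. min a b \<le> z \<and> z \<le> max a b \<and> g b - g a = g' z * (b - a)"
proof -
  consider "a = b" | "a < b" | "b < a"
    by linarith
  then show ?thesis
  proof cases
    case 2
    then obtain z where "a < z" "z < b" "g b - g a = g' z * (b - a)"
      using mvt_nonneg_halfline[OF deriv \<open>0 \<le> a\<close>] by blast
    then show ?thesis
      by (intro exI[of _ z]) auto
  next
    case 3
    then obtain z where "b < z" "z < a" "g a - g b = g' z * (a - b)"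
      using mvt_nonneg_halfline[OF deriv \<open>0 \<le> b\<close>] by blast
    then show ?thesis
      by (intro exI[of _ z]) (auto simp: algebra_simps)
  qed auto
qed

lemma has_partial_orthant_line:
  assumes "p \<in> orthant n" "j \<in> {1..n}" "t \<ge> 0"
    and "\<forall>x\<in>orthant n. has_partial f j (f' x) x (orthant n)"
  shows "((\<lambda>u. f (p(j := u))) has_real_derivative f' (p(j := t))) (at t within {0..})"
proof -
  have pt: "p(j := t) \<in> orthant n"
    using orthant_upd_iff assms by blast
  then have "has_partial f j (f' (p(j := t))) (p(j := t)) (orthant n)"
    using assms(4) by blast
  then show ?thesis
    using has_partial_orthant_iff[OF pt assms(2)] by simp
qed

lemma orthant_coord_strict_antimono:
  assumes "p \<in> orthant n" "j \<in> {1..n}"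
    and "\<forall>x\<in>orthant n. has_partial f j (f' x) x (orthant n)" "\<forall>x\<in>orthant n. f' x < 0"
    and "0 \<le> a" "a < b"
  shows "f (p(j := b)) < f (p(j := a))"
proof -
  obtain z where "a < z" "f (p(j := b)) - f (p(j := a)) = f' (p(j := z)) * (b - a)"
    using mvt_nonneg_halfline[OF has_partial_orthant_line[OF assms(1,2) _ assms(3)] assms(5,6)]
    by blast
  moreover have "f' (p(j := z)) < 0"
    using assms(1,2,4,5) \<open>a < z\<close> orthant_upd_iff by simp
  ultimately show ?thesis
    using \<open>a < b\<close> mult_neg_pos[of "f' (p(j := z))" "b - a"] by simp
qed

lemma orthant_coord_mono:
  assumes "p \<in> orthant n" "j \<in> {1..n}"
    and "\<forall>x\<in>orthant n. has_partial f j (f' x) x (orthant n)" "\<forall>x\<in>orthant n. f' x > 0"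
    and "0 \<le> a" "a \<le> b"
  shows "f (p(j := a)) \<le> f (p(j := b))"
proof (cases "a = b")
  case False
  then obtain z where "a < z" "f (p(j := b)) - f (p(j := a)) = f' (p(j := z)) * (b - a)"
    using mvt_nonneg_halfline[OF has_partial_orthant_line[OF assms(1,2) _ assms(3)] assms(5)] assms(6)
    by force
  moreover have "f' (p(j := z)) > 0"
    using assms(1,2,4,5) \<open>a < z\<close> orthant_upd_iff by simp
  ultimately show ?thesis
    using assms(6) mult_nonneg_nonneg[of "f' (p(j := z))" "b - a"] by linarith
qed simp

subsection \<open>Smoothness via classes closed under partial differentiation\<close>

definition partials_closed :: "nat \<Rightarrow> (((nat \<Rightarrow> real) \<Rightarrow> real) \<Rightarrow> bool) \<Rightarrow> bool" where
  "partials_closed n P \<longleftrightarrow> (\<forall>g. P g \<longrightarrow> continuous_on (orthant n) g \<and>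
     (\<forall>j\<in>{1..n}. \<exists>g'. P g' \<and> (\<forall>p\<in>orthant n. has_partial g j (g' p) p (orthant n))))"

definition chosen_partial ::
  "nat \<Rightarrow> (((nat \<Rightarrow> real) \<Rightarrow> real) \<Rightarrow> bool) \<Rightarrow> nat \<Rightarrow> ((nat \<Rightarrow> real) \<Rightarrow> real) \<Rightarrow> (nat \<Rightarrow> real) \<Rightarrow> real"
  where "chosen_partial n P j g =
    (SOME g'. P g' \<and> (\<forall>p\<in>orthant n. has_partial g j (g' p) p (orthant n)))"

primrec iterated_partial ::
  "nat \<Rightarrow> (((nat \<Rightarrow> real) \<Rightarrow> real) \<Rightarrow> bool) \<Rightarrow> ((nat \<Rightarrow> real) \<Rightarrow> real) \<Rightarrow> nat list \<Rightarrow> (nat \<Rightarrow> real) \<Rightarrow> real"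
  where
    "iterated_partial n P f [] = f"
  | "iterated_partial n P f (j # js) = chosen_partial n P j (iterated_partial n P f js)"

lemma partials_closed_continuous: "partials_closed n P \<Longrightarrow> P g \<Longrightarrow> continuous_on (orthant n) g"
  unfolding partials_closed_def by blast

lemma partials_closed_has_partial: "partials_closed n P \<Longrightarrow> P g \<Longrightarrow> j \<in> {1..n} \<Longrightarrow>
    \<exists>g'. P g' \<and> (\<forall>p\<in>orthant n. has_partial g j (g' p) p (orthant n))"
  unfolding partials_closed_def by blast

lemma chosen_partial:
  assumes "partials_closed n P" "P g" "j \<in> {1..n}"
  shows "P (chosen_partial n P j g)"
    and "\<forall>p\<in>orthant n. has_partial g j (chosen_partial n P j g p) p (orthant n)"
proof -
  have "P (chosen_partial n P j g) \<and>
      (\<forall>p\<in>orthant n. has_partial g j (chosen_partial n P j g p) p (orthant n))"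
    using someI_ex[OF partials_closed_has_partial[of n P g j, OF assms]] unfolding chosen_partial_def .
  then show "P (chosen_partial n P j g)"
    and "\<forall>p\<in>orthant n. has_partial g j (chosen_partial n P j g p) p (orthant n)"
    by simp_all
qed

lemma iterated_partial_in_class:
  assumes "partials_closed n P" "P f"
  shows "set js \<subseteq> {1..n} \<Longrightarrow> P (iterated_partial n P f js)"
proof (induction js)
  case (Cons j js)
  then have "P (iterated_partial n P f js)" "j \<in> {1..n}"
    by simp_all
  then show ?case
    by (simp add: chosen_partial(1)[of n P, OF assms(1)])
qed (simp add: assms(2))

lemma smooth_on_orthant_iff_partials_closed:
  "smooth_on_orthant n f \<longleftrightarrow> (\<exists>P. partials_closed n P \<and> P f)"
proof
  assume "smooth_on_orthant n f"
  then obtain F where F0: "\<forall>p\<in>orthant n. F [] p = f p"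
    and F: "\<forall>js. set js \<subseteq> {1..n} \<longrightarrow> continuous_on (orthant n) (F js) \<and>
      (\<forall>j\<in>{1..n}. \<forall>p\<in>orthant n. has_partial (F js) j (F (j # js) p) p (orthant n))"
    unfolding smooth_on_orthant_def by (elim exE conjE)
  define P where "P g \<longleftrightarrow> (\<exists>js. set js \<subseteq> {1..n} \<and> (\<forall>p\<in>orthant n. g p = F js p))" for g
  have "partials_closed n P"
    unfolding partials_closed_def
  proof (intro allI impI conjI ballI)
    fix g assume "P g"
    then obtain js where js: "set js \<subseteq> {1..n}" "\<forall>p\<in>orthant n. g p = F js p"
      unfolding P_def by (elim exE conjE)
    have "continuous_on (orthant n) (F js)"
      using F js by blast
    then show "continuous_on (orthant n) g"
      by (rule continuous_on_eq) (use js(2) in auto)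
    fix j assume j: "j \<in> {1..n}"
    have "P (F (j # js))"
      unfolding P_def using js j by (intro exI[of _ "j # js"]) auto
    moreover have "\<forall>p\<in>orthant n. has_partial g j (F (j # js) p) p (orthant n)"
    proof
      fix p assume p: "p \<in> orthant n"
      have "has_partial (F js) j (F (j # js) p) p (orthant n)"
        using F js(1) j p by blast
      then show "has_partial g j (F (j # js) p) p (orthant n)"
        by (rule has_partial_cong[rotated 2]) (use js(2) p in auto)
    qed
    ultimately show "\<exists>g'. P g' \<and> (\<forall>p\<in>orthant n. has_partial g j (g' p) p (orthant n))"
      by (intro exI[of _ "F (j # js)"] conjI)
  qed
  moreover have "P f"
    unfolding P_def using F0 by (intro exI[of _ "[]"]) auto
  ultimately show "\<exists>P. partials_closed n P \<and> P f"
    by (intro exI[of _ P] conjI)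
next
  assume "\<exists>P. partials_closed n P \<and> P f"
  then obtain P where P: "partials_closed n P" "P f"
    by (elim exE conjE)
  show "smooth_on_orthant n f"
    unfolding smooth_on_orthant_def
  proof (intro exI[of _ "iterated_partial n P f"] conjI allI impI ballI)
    fix js :: "nat list" assume js: "set js \<subseteq> {1..n}"
    note in_class = iterated_partial_in_class[of n P f, OF P js]
    show "continuous_on (orthant n) (iterated_partial n P f js)"
      by (rule partials_closed_continuous[of n P, OF P(1) in_class])
    fix j p assume "j \<in> {1..n}" "p \<in> orthant n"
    then show "has_partial (iterated_partial n P f js) j (iterated_partial n P f (j # js) p) p (orthant n)"
      using chosen_partial(2)[of n P, OF P(1) in_class] by simp
  qed simp
qed

lemma smooth_on_orthant_coinduct: "partials_closed n P \<Longrightarrow> P f \<Longrightarrow> smooth_on_orthant n f"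
  by (rule smooth_on_orthant_iff_partials_closed[THEN iffD2], rule exI[of _ P], rule conjI)

lemma partials_closed_smooth_on_orthant: "partials_closed n (smooth_on_orthant n)"
  unfolding partials_closed_def
proof (intro allI impI conjI ballI)
  fix g assume "smooth_on_orthant n g"
  then obtain P where P: "partials_closed n P" "P g"
    unfolding smooth_on_orthant_iff_partials_closed by (elim exE conjE)
  then show "continuous_on (orthant n) g"
    by (rule partials_closed_continuous[of n P g])
  fix j assume "j \<in> {1..n}"
  then obtain g' where g': "P g'" "\<forall>p\<in>orthant n. has_partial g j (g' p) p (orthant n)"
    using partials_closed_has_partial[of n P g j, OF P] by blast
  then show "\<exists>g'. smooth_on_orthant n g' \<and> (\<forall>p\<in>orthant n. has_partial g j (g' p) p (orthant n))"
    using smooth_on_orthant_coinduct[of n P g', OF P(1)] by blast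
qed

lemma smooth_on_orthant_continuous: "smooth_on_orthant n f \<Longrightarrow> continuous_on (orthant n) f"
  by (rule partials_closed_continuous[OF partials_closed_smooth_on_orthant])

text \<open>Partials on the orthant are unique (has_partial_orthant_unique), so fixing
  one by choice loses nothing.\<close>

abbreviation partial_deriv :: "nat \<Rightarrow> nat \<Rightarrow> ((nat \<Rightarrow> real) \<Rightarrow> real) \<Rightarrow> (nat \<Rightarrow> real) \<Rightarrow> real"
  where "partial_deriv n \<equiv> chosen_partial n (smooth_on_orthant n)"

lemma smooth_partial_deriv:
  "smooth_on_orthant n f \<Longrightarrow> j \<in> {1..n} \<Longrightarrow> smooth_on_orthant n (partial_deriv n j f)"
  by (rule chosen_partial(1)[OF partials_closed_smooth_on_orthant])

lemma has_partial_partial_deriv: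
  "smooth_on_orthant n f \<Longrightarrow> j \<in> {1..n} \<Longrightarrow>
    \<forall>p\<in>orthant n. has_partial f j (partial_deriv n j f p) p (orthant n)"
  by (rule chosen_partial(2)[OF partials_closed_smooth_on_orthant])

lemma smooth_on_orthant_cong:
  assumes "smooth_on_orthant n f" "\<forall>p\<in>orthant n. f p = g p"
  shows "smooth_on_orthant n g"
proof -
  define P where "P g \<longleftrightarrow> (\<exists>f. smooth_on_orthant n f \<and> (\<forall>p\<in>orthant n. f p = g p))" for g
  have "partials_closed n P"
    unfolding partials_closed_def
  proof (intro allI impI conjI ballI)
    fix g assume "P g"
    then obtain f where f: "smooth_on_orthant n f" "\<forall>p\<in>orthant n. f p = g p"
      unfolding P_def by blast
    show "continuous_on (orthant n) g"
      by (rule continuous_on_eq[OF smooth_on_orthant_continuous[OF f(1)]]) (use f(2) in auto)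
    fix j assume j: "j \<in> {1..n}"
    have "P (partial_deriv n j f)"
      unfolding P_def using smooth_partial_deriv[OF f(1) j] by blast
    moreover have "\<forall>p\<in>orthant n. has_partial g j (partial_deriv n j f p) p (orthant n)"
      using has_partial_partial_deriv[OF f(1) j] f(2) has_partial_cong[of "orthant n" f g] by simp
    ultimately show "\<exists>g'. P g' \<and> (\<forall>p\<in>orthant n. has_partial g j (g' p) p (orthant n))"
      by blast
  qed
  moreover have "P g"
    unfolding P_def using assms by blast
  ultimately show ?thesis
    by (rule smooth_on_orthant_coinduct[of n P])
qed

lemma smooth_const: "smooth_on_orthant n (\<lambda>_. c)"
proof -
  define P where "P g \<longleftrightarrow> (\<exists>c. g = (\<lambda>_::nat \<Rightarrow> real. c))" for g :: "(nat \<Rightarrow> real) \<Rightarrow> real"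
  have "partials_closed n P"
    unfolding partials_closed_def P_def
    by (auto intro!: exI[of _ "\<lambda>_. 0"] has_partial_const)
  then show ?thesis
    by (rule smooth_on_orthant_coinduct[of n P]) (auto simp: P_def)
qed

text \<open>Products alone are not closed under differentiation, but finite sums of
  products of smooth functions are.\<close>

definition sum_prod :: "(((nat \<Rightarrow> real) \<Rightarrow> real) \<times> ((nat \<Rightarrow> real) \<Rightarrow> real)) list \<Rightarrow> (nat \<Rightarrow> real) \<Rightarrow> real"
  where "sum_prod L p = (\<Sum>(f, g)\<leftarrow>L. f p * g p)"

definition sum_prod_partial :: "nat \<Rightarrow> nat \<Rightarrow> (((nat \<Rightarrow> real) \<Rightarrow> real) \<times> ((nat \<Rightarrow> real) \<Rightarrow> real)) list
    \<Rightarrow> (((nat \<Rightarrow> real) \<Rightarrow> real) \<times> ((nat \<Rightarrow> real) \<Rightarrow> real)) list"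
  where "sum_prod_partial n j L =
    concat (map (\<lambda>(f, g). [(partial_deriv n j f, g), (f, partial_deriv n j g)]) L)"

lemma sum_prod_simps [simp]:
  "sum_prod [] p = 0" "sum_prod ((f, g) # L) p = f p * g p + sum_prod L p"
  unfolding sum_prod_def by simp_all

lemma sum_prod_partial_simps [simp]:
  "sum_prod_partial n j [] = []"
  "sum_prod_partial n j ((f, g) # L) =
    (partial_deriv n j f, g) # (f, partial_deriv n j g) # sum_prod_partial n j L"
  unfolding sum_prod_partial_def by simp_all

lemma sum_prod_continuous:
  "\<forall>(f, g)\<in>set L. smooth_on_orthant n f \<and> smooth_on_orthant n g \<Longrightarrow>
    continuous_on (orthant n) (sum_prod L)"
proof (induction L)
  case (Cons fg L)
  obtain f g where fg: "fg = (f, g)"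
    by fastforce
  then have "continuous_on (orthant n) f" "continuous_on (orthant n) g"
    using Cons.prems smooth_on_orthant_continuous by auto
  moreover have "continuous_on (orthant n) (sum_prod L)"
    using Cons by simp
  ultimately have "continuous_on (orthant n) (\<lambda>p. f p * g p + sum_prod L p)"
    by (intro continuous_intros)
  then show ?case
    using fg by simp
qed (simp add: sum_prod_def)

lemma has_partial_sum_prod:
  assumes "\<forall>(f, g)\<in>set L. smooth_on_orthant n f \<and> smooth_on_orthant n g"
    and j: "j \<in> {1..n}" and p: "p \<in> orthant n"
  shows "has_partial (sum_prod L) j (sum_prod (sum_prod_partial n j L) p) p (orthant n)
    \<and> (\<forall>(f, g)\<in>set (sum_prod_partial n j L). smooth_on_orthant n f \<and> smooth_on_orthant n g)"
  using assms(1)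
proof (induction L)
  case Nil
  then show ?case
    using has_partial_const[of 0 j p "orthant n"] by (simp add: sum_prod_def[abs_def])
next
  case (Cons fg L)
  obtain f g where fg: "fg = (f, g)"
    by fastforce
  have s: "smooth_on_orthant n f" "smooth_on_orthant n g"
    using Cons.prems fg by auto
  have IH: "has_partial (sum_prod L) j (sum_prod (sum_prod_partial n j L) p) p (orthant n)"
    "\<forall>(f, g)\<in>set (sum_prod_partial n j L). smooth_on_orthant n f \<and> smooth_on_orthant n g"
    using Cons by auto
  have "has_partial (\<lambda>x. f x * g x + sum_prod L x) j
      ((partial_deriv n j f p * g p + f p * partial_deriv n j g p) + sum_prod (sum_prod_partial n j L) p)
      p (orthant n)"
    using has_partial_partial_deriv[OF s(1) j] has_partial_partial_deriv[OF s(2) j] p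
    by (intro has_partial_add[OF has_partial_mult IH(1)]) auto
  moreover have "sum_prod (fg # L) = (\<lambda>x. f x * g x + sum_prod L x)"
    using fg by auto
  ultimately show ?case
    using IH(2) s smooth_partial_deriv[OF s(1) j] smooth_partial_deriv[OF s(2) j] fg
    by (simp add: add.assoc)
qed

lemma smooth_sum_prod:
  assumes "\<forall>(f, g)\<in>set L. smooth_on_orthant n f \<and> smooth_on_orthant n g"
  shows "smooth_on_orthant n (sum_prod L)"
proof -
  define P where "P h \<longleftrightarrow> (\<exists>L. (\<forall>(f, g)\<in>set L. smooth_on_orthant n f \<and> smooth_on_orthant n g)
      \<and> h = sum_prod L)" for h
  have "partials_closed n P"
    unfolding partials_closed_def
  proof (intro allI impI conjI ballI)
    fix h assume "P h"
    then obtain L where L: "\<forall>(f, g)\<in>set L. smooth_on_orthant n f \<and> smooth_on_orthant n g"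
      "h = sum_prod L"
      unfolding P_def by blast
    then show "continuous_on (orthant n) h"
      using sum_prod_continuous by blast
    fix j assume j: "j \<in> {1..n}"
    have "(\<lambda>_. 0) \<in> orthant n"
      unfolding orthant_def by simp
    then have "P (sum_prod (sum_prod_partial n j L))"
      unfolding P_def using has_partial_sum_prod[OF L(1) j] by blast
    moreover have "\<forall>p\<in>orthant n. has_partial h j (sum_prod (sum_prod_partial n j L) p) p (orthant n)"
      using has_partial_sum_prod[OF L(1) j] L(2) by blast
    ultimately show "\<exists>g'. P g' \<and> (\<forall>p\<in>orthant n. has_partial h j (g' p) p (orthant n))"
      by blast
  qed
  then show ?thesis
    by (rule smooth_on_orthant_coinduct[of n P]) (use assms P_def in blast)
qed

lemma smooth_mult:
  "smooth_on_orthant n f \<Longrightarrow> smooth_on_orthant n g \<Longrightarrow> smooth_on_orthant n (\<lambda>x. f x * g x)"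
  using smooth_sum_prod[of "[(f, g)]" n] by (simp add: sum_prod_def[abs_def])

lemma smooth_add:
  "smooth_on_orthant n f \<Longrightarrow> smooth_on_orthant n g \<Longrightarrow> smooth_on_orthant n (\<lambda>x. f x + g x)"
  using smooth_sum_prod[of "[(f, \<lambda>_. 1), (g, \<lambda>_. 1)]" n] smooth_const[of n 1]
  by (simp add: sum_prod_def[abs_def])

lemma smooth_cmult: "smooth_on_orthant n f \<Longrightarrow> smooth_on_orthant n (\<lambda>x. c * f x)"
  using smooth_mult[OF smooth_const[of n c]] by simp

lemma smooth_divide_power:
  assumes f: "smooth_on_orthant n f" "\<forall>p\<in>orthant n. f p \<noteq> 0" and g: "smooth_on_orthant n g"
  shows "smooth_on_orthant n (\<lambda>x. g x / f x ^ k)"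
proof -
  define P where
    "P h \<longleftrightarrow> (\<exists>g k. smooth_on_orthant n g \<and> (\<forall>p\<in>orthant n. h p = g p / f p ^ k))" for h
  have "partials_closed n P"
    unfolding partials_closed_def
  proof (intro allI impI conjI ballI)
    fix h assume "P h"
    then obtain g k where g: "smooth_on_orthant n g" "\<forall>p\<in>orthant n. h p = g p / f p ^ k"
      unfolding P_def by blast
    have "continuous_on (orthant n) (\<lambda>p. g p / f p ^ k)"
      using smooth_on_orthant_continuous[OF g(1)] smooth_on_orthant_continuous[OF f(1)] f(2)
      by (intro continuous_intros) auto
    then show "continuous_on (orthant n) h"
      using g(2) continuous_on_eq by force
    fix j assume j: "j \<in> {1..n}"
    define g' where "g' x = partial_deriv n j g x * f x + (- real k) * (g x * partial_deriv n j f x)" for x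
    have "smooth_on_orthant n g'"
      unfolding g'_def
      by (intro smooth_add smooth_mult smooth_cmult smooth_partial_deriv g(1) f(1) j)
    then have "P (\<lambda>x. g' x / f x ^ Suc k)"
      unfolding P_def by blast
    moreover have "\<forall>p\<in>orthant n. has_partial h j (g' p / f p ^ Suc k) p (orthant n)"
    proof
      fix p assume p: "p \<in> orthant n"
      have "has_partial (\<lambda>x. g x / f x ^ k) j
          ((partial_deriv n j g p * f p - real k * g p * partial_deriv n j f p) / f p ^ Suc k) p (orthant n)"
        using has_partial_partial_deriv[OF g(1) j] has_partial_partial_deriv[OF f(1) j] p f(2)
        by (intro has_partial_divide_power) auto
      moreover have "partial_deriv n j g p * f p - real k * g p * partial_deriv n j f p = g' p"
        unfolding g'_def by simp
      ultimately have "has_partial (\<lambda>x. g x / f x ^ k) j (g' p / f p ^ Suc k) p (orthant n)"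
        by simp
      then show "has_partial h j (g' p / f p ^ Suc k) p (orthant n)"
        using has_partial_cong[of "orthant n" "\<lambda>x. g x / f x ^ k" h] g(2) p by simp
    qed
    ultimately show "\<exists>g'. P g' \<and> (\<forall>p\<in>orthant n. has_partial h j (g' p) p (orthant n))"
      by blast
  qed
  then show ?thesis
    by (rule smooth_on_orthant_coinduct[of n P]) (use g P_def in blast)
qed

lemma smooth_divide:
  "smooth_on_orthant n f \<Longrightarrow> \<forall>p\<in>orthant n. f p \<noteq> 0 \<Longrightarrow> smooth_on_orthant n g \<Longrightarrow>
    smooth_on_orthant n (\<lambda>x. g x / f x)"
  using smooth_divide_power[of n f g 1] by simp

subsection \<open>The choke price as an implicit function\<close>

lemma continuous_on_coordinate: "continuous_on S (\<lambda>x::nat \<Rightarrow> real. x k)"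
  by (rule continuous_on_subset[OF continuous_on_product_coordinates]) auto

lemma continuous_on_fun_upd:
  assumes "continuous_on S c"
  shows "continuous_on S (\<lambda>x::nat \<Rightarrow> real. x(k := c x))"
proof (rule continuous_on_coordinatewise_then_product)
  fix i
  show "continuous_on S (\<lambda>x. (x(k := c x)) i)"
    by (cases "i = k") (auto simp: assms continuous_on_coordinate)
qed

lemma tendsto_fun_upd2:
  fixes p :: "nat \<Rightarrow> real"
  assumes "(a \<longlongrightarrow> a0) F" "(b \<longlongrightarrow> b0) F"
  shows "((\<lambda>z. p(j := a z, k := b z)) \<longlongrightarrow> p(j := a0, k := b0)) F"
proof -
  have "continuous_on UNIV (\<lambda>z::real \<times> real. p(j := fst z, k := snd z))"
  proof (rule continuous_on_coordinatewise_then_product)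
    fix i
    show "continuous_on UNIV (\<lambda>z::real \<times> real. (p(j := fst z, k := snd z)) i)"
      by (cases "i = k"; cases "i = j") (auto intro!: continuous_intros)
  qed
  from continuous_on_tendsto_compose[OF this tendsto_Pair[OF assms]] show ?thesis
    by simp
qed

lemma tendsto_fun_upd:
  fixes p :: "nat \<Rightarrow> real"
  shows "(a \<longlongrightarrow> a0) F \<Longrightarrow> ((\<lambda>z. p(j := a z)) \<longlongrightarrow> p(j := a0)) F"
  using tendsto_fun_upd2[of a a0 F a a0 p j j] by simp

lemma eventually_at_within_mem: "eventually (\<lambda>x. x \<in> S) (at a within S)"
  by (auto simp: eventually_at_filter)

lemma last_index: "Suc n \<in> {1..Suc n}"
  by simp

text \<open>In the application H is the demand of the last firm, D^{n+1}_{n+1}, and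
  choke p is the choke price of firm n+1 given the prices p of the others.\<close>

locale choke_price =
  fixes n :: nat and H choke :: "(nat \<Rightarrow> real) \<Rightarrow> real"
  assumes smooth_H: "smooth_on_orthant (Suc n) H"
    and H_last_neg: "\<forall>x\<in>orthant (Suc n). partial_deriv (Suc n) (Suc n) H x < 0"
    and choke_nonneg: "\<forall>p\<in>orthant n. choke p \<ge> 0"
    and H_choke: "\<forall>p\<in>orthant n. H (p(Suc n := choke p)) = 0"
begin

lemma H_strict_antimono_last:
  assumes p: "p \<in> orthant n" and "0 \<le> a" "a < b"
  shows "H (p(Suc n := b)) < H (p(Suc n := a))"
proof -
  have "p(Suc n := 0) \<in> orthant (Suc n)"
    using orthant_extend[OF p] by simp
  from orthant_coord_strict_antimono[OF this last_index
      has_partial_partial_deriv[OF smooth_H last_index] H_last_neg assms(2,3)]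
  show ?thesis
    by simp
qed

lemma H_pos_below_choke: "p \<in> orthant n \<Longrightarrow> 0 \<le> t \<Longrightarrow> t < choke p \<Longrightarrow> H (p(Suc n := t)) > 0"
  using H_strict_antimono_last[of p t "choke p"] H_choke by auto

lemma H_neg_above_choke: "p \<in> orthant n \<Longrightarrow> choke p < t \<Longrightarrow> H (p(Suc n := t)) < 0"
  using H_strict_antimono_last[of p "choke p" t] H_choke choke_nonneg by auto

lemma choke_unique: "p \<in> orthant n \<Longrightarrow> 0 \<le> t \<Longrightarrow> H (p(Suc n := t)) = 0 \<Longrightarrow> t = choke p"
  using H_pos_below_choke H_neg_above_choke by (metis less_irrefl linorder_neqE_linordered_idom)

lemma choke_less_if_H_neg:
  assumes "p \<in> orthant n" "0 \<le> t" "H (p(Suc n := t)) < 0"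
  shows "choke p < t"
proof (rule ccontr)
  assume "\<not> choke p < t"
  then consider "choke p = t" | "t < choke p"
    by linarith
  then show False
    using H_pos_below_choke[OF assms(1,2)] H_choke assms by cases force+
qed

lemma choke_greater_if_H_pos:
  assumes "p \<in> orthant n" "H (p(Suc n := t)) > 0"
  shows "t < choke p"
proof (rule ccontr)
  assume "\<not> t < choke p"
  then consider "choke p = t" | "choke p < t"
    by linarith
  then show False
    using H_neg_above_choke[OF assms(1)] H_choke assms by cases force+
qed

lemma continuous_on_H_fixed_last:
  assumes "t \<ge> 0"
  shows "continuous_on (orthant n) (\<lambda>x. H (x(Suc n := t)))"
proof -
  have "continuous_on (orthant n) (H \<circ> (\<lambda>x. x(Suc n := t)))"
  proof (rule continuous_on_compose)
    show "continuous_on (orthant n) (\<lambda>x. x(Suc n := t))"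
      by (rule continuous_on_fun_upd) (rule continuous_on_const)
    show "continuous_on ((\<lambda>x. x(Suc n := t)) ` orthant n) H"
      by (rule continuous_on_subset[OF smooth_on_orthant_continuous[OF smooth_H]])
        (use orthant_extend assms in auto)
  qed
  then show ?thesis
    by (simp add: o_def)
qed

text \<open>Continuity of the choke price: H changes sign across choke p, and the sign
  of H at a fixed last price persists near p.\<close>

lemma continuous_on_choke: "continuous_on (orthant n) choke"
  unfolding continuous_on_def
proof
  fix p assume p: "p \<in> orthant n"
  let ?F = "at p within orthant n"
  have H_near: "((\<lambda>x. H (x(Suc n := t))) \<longlongrightarrow> H (p(Suc n := t))) ?F" if "t \<ge> 0" for t
    using continuous_on_H_fixed_last[OF that] p unfolding continuous_on_def by blast
  show "(choke \<longlongrightarrow> choke p) ?F"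
    unfolding tendsto_iff
  proof (intro allI impI)
    fix e :: real assume e: "e > 0"
    have "choke p + e \<ge> 0"
      using choke_nonneg p e by force
    moreover have "H (p(Suc n := choke p + e)) < 0"
      using H_neg_above_choke[OF p] e by simp
    ultimately have "eventually (\<lambda>x. H (x(Suc n := choke p + e)) < 0) ?F"
      using H_near order_tendstoD(2) by blast
    then have above: "eventually (\<lambda>x. choke x < choke p + e) ?F"
      using eventually_at_within_mem[of "orthant n" p]
      by eventually_elim (use choke_less_if_H_neg \<open>choke p + e \<ge> 0\<close> in blast)
    have below: "eventually (\<lambda>x. choke p - e < choke x) ?F"
    proof (cases "choke p - e < 0")
      case True
      show ?thesis
        using eventually_at_within_mem[of "orthant n" p]
        by eventually_elim (use True choke_nonneg in force)
    next
      case False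
      then have "H (p(Suc n := choke p - e)) > 0"
        using H_pos_below_choke[OF p] e by simp
      then have "eventually (\<lambda>x. H (x(Suc n := choke p - e)) > 0) ?F"
        using order_tendstoD(1)[OF H_near] False by simp
      then show ?thesis
        using eventually_at_within_mem[of "orthant n" p]
        by eventually_elim (use choke_greater_if_H_pos in blast)
    qed
    show "eventually (\<lambda>x. dist (choke x) (choke p) < e) ?F"
      using above below by eventually_elim (auto simp: dist_real_def abs_less_iff)
  qed
qed

lemma continuous_on_comp_choke:
  assumes "smooth_on_orthant (Suc n) G"
  shows "continuous_on (orthant n) (\<lambda>x. G (x(Suc n := choke x)))"
proof -
  have "continuous_on (orthant n) (G \<circ> (\<lambda>x. x(Suc n := choke x)))"
  proof (rule continuous_on_compose)
    show "continuous_on (orthant n) (\<lambda>x. x(Suc n := choke x))"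
      by (rule continuous_on_fun_upd) (rule continuous_on_choke)
    show "continuous_on ((\<lambda>x. x(Suc n := choke x)) ` orthant n) G"
      by (rule continuous_on_subset[OF smooth_on_orthant_continuous[OF assms]])
        (use orthant_extend choke_nonneg in auto)
  qed
  then show ?thesis
    by (simp add: o_def)
qed

lemma tendsto_choke_coord:
  assumes p: "p \<in> orthant n" and j: "j \<in> {1..n}"
  shows "((\<lambda>s. choke (p(j := s))) \<longlongrightarrow> choke p) (at (p j) within {0..})"
proof -
  have "((\<lambda>s. choke (p(j := s))) \<longlongrightarrow> choke (p(j := p j))) (at (p j) within {0..})"
  proof (rule continuous_on_tendsto_compose[OF continuous_on_choke])
    show "((\<lambda>s. p(j := s)) \<longlongrightarrow> p(j := p j)) (at (p j) within {0..})"
      by (rule tendsto_fun_upd[OF tendsto_ident_at])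
    show "p(j := p j) \<in> orthant n"
      using p by simp
    show "\<forall>\<^sub>F s in at (p j) within {0..}. p(j := s) \<in> orthant n"
      using eventually_at_within_mem[of "{0..}" "p j"]
      by eventually_elim (use orthant_upd_iff p j in auto)
  qed
  then show ?thesis
    by simp
qed

text \<open>Mean value theorem in the last variable between choke p and the choke price
  after moving p j to s; the intermediate slope c s tends to the last partial
  of G at (p, choke p).\<close>

lemma mvt_towards_choke:
  assumes G: "smooth_on_orthant (Suc n) G" and p: "p \<in> orthant n" and j: "j \<in> {1..n}"
  obtains c where
    "(c \<longlongrightarrow> partial_deriv (Suc n) (Suc n) G (p(Suc n := choke p))) (at (p j) within {0..})"
    "\<And>s. s \<ge> 0 \<Longrightarrow> G (p(j := s, Suc n := choke (p(j := s)))) - G (p(j := s, Suc n := choke p))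
      = c s * (choke (p(j := s)) - choke p)"
proof -
  define G' where "G' = partial_deriv (Suc n) (Suc n) G"
  let ?F = "at (p j) within {0..}"
  have choke_s: "choke (p(j := s)) \<ge> 0" if "s \<ge> 0" for s
    using choke_nonneg orthant_upd_iff[OF p j] that by blast
  have choke_p: "choke p \<ge> 0"
    using choke_nonneg p by blast
  have "\<exists>z. min (choke p) (choke (p(j := s))) \<le> z \<and> z \<le> max (choke p) (choke (p(j := s))) \<and>
      G (p(j := s, Suc n := choke (p(j := s)))) - G (p(j := s, Suc n := choke p))
      = G' (p(j := s, Suc n := z)) * (choke (p(j := s)) - choke p)" if "s \<ge> 0" for s
  proof (rule mvt_nonneg_halfline_between[OF _ choke_p choke_s[OF that]])
    fix t :: real assume "t \<ge> 0"
    from has_partial_orthant_line[OF orthant_upd_extend[OF p j that order_refl] last_index this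
        has_partial_partial_deriv[OF G last_index]]
    show "((\<lambda>u. G (p(j := s, Suc n := u))) has_real_derivative G' (p(j := s, Suc n := t))) (at t within {0..})"
      unfolding G'_def by simp
  qed
  then obtain z where z: "min (choke p) (choke (p(j := s))) \<le> z s \<and> z s \<le> max (choke p) (choke (p(j := s))) \<and>
      G (p(j := s, Suc n := choke (p(j := s)))) - G (p(j := s, Suc n := choke p))
      = G' (p(j := s, Suc n := z s)) * (choke (p(j := s)) - choke p)" if "s \<ge> 0" for s
    by metis
  have nonneg: "eventually (\<lambda>s. s \<ge> 0) ?F"
    using eventually_at_within_mem[of "{0..}" "p j"] by simp
  have choke_lim: "((\<lambda>s. choke (p(j := s))) \<longlongrightarrow> choke p) ?F"
    by (rule tendsto_choke_coord[OF p j])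
  have z_lim: "(z \<longlongrightarrow> choke p) ?F"
  proof (rule tendsto_sandwich)
    show "eventually (\<lambda>s. min (choke p) (choke (p(j := s))) \<le> z s) ?F"
      using nonneg by eventually_elim (use z in blast)
    show "eventually (\<lambda>s. z s \<le> max (choke p) (choke (p(j := s)))) ?F"
      using nonneg by eventually_elim (use z in blast)
    show "((\<lambda>s. min (choke p) (choke (p(j := s)))) \<longlongrightarrow> choke p) ?F"
      using tendsto_min[OF tendsto_const choke_lim, of "choke p"] by simp
    show "((\<lambda>s. max (choke p) (choke (p(j := s)))) \<longlongrightarrow> choke p) ?F"
      using tendsto_max[OF tendsto_const choke_lim, of "choke p"] by simp
  qed
  have "((\<lambda>s. G' (p(j := s, Suc n := z s))) \<longlongrightarrow> G' (p(j := p j, Suc n := choke p))) ?F"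
  proof (rule continuous_on_tendsto_compose[OF smooth_on_orthant_continuous[OF
        smooth_partial_deriv[OF G last_index]], folded G'_def])
    show "((\<lambda>s. p(j := s, Suc n := z s)) \<longlongrightarrow> p(j := p j, Suc n := choke p)) ?F"
      by (rule tendsto_fun_upd2[OF tendsto_ident_at z_lim])
    show "p(j := p j, Suc n := choke p) \<in> orthant (Suc n)"
      using orthant_upd_extend[OF p j _ choke_p] orthant_nonneg[OF p j] by blast
    show "\<forall>\<^sub>F s in ?F. p(j := s, Suc n := z s) \<in> orthant (Suc n)"
      using nonneg
    proof eventually_elim
      case (elim s)
      then have "z s \<ge> 0"
        using z[OF elim] choke_s[OF elim] choke_p by linarith
      then show ?case
        using orthant_upd_extend[OF p j elim] by blast
    qed
  qed
  then show ?thesis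
    using that[of "\<lambda>s. G' (p(j := s, Suc n := z s))"] z unfolding G'_def by simp
qed

lemma has_deriv_coord_at_choke:
  assumes G: "smooth_on_orthant (Suc n) G" and p: "p \<in> orthant n" and j: "j \<in> {1..n}"
  shows "((\<lambda>s. G (p(j := s, Suc n := choke p))) has_real_derivative
      partial_deriv (Suc n) j G (p(Suc n := choke p))) (at (p j) within {0..})"
proof -
  have Y: "p(Suc n := choke p) \<in> orthant (Suc n)"
    using orthant_extend[OF p] choke_nonneg p by blast
  have j': "j \<in> {1..Suc n}"
    using j by simp
  have "has_partial G j (partial_deriv (Suc n) j G (p(Suc n := choke p))) (p(Suc n := choke p)) (orthant (Suc n))"
    using has_partial_partial_deriv[OF G j'] Y by blast
  moreover have "j \<noteq> Suc n"
    using j by simp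
  ultimately show ?thesis
    using has_partial_orthant_iff[OF Y j'] by (simp add: fun_upd_twist)
qed

definition implicit_slope :: "nat \<Rightarrow> (nat \<Rightarrow> real) \<Rightarrow> real" where
  "implicit_slope j y = - partial_deriv (Suc n) j H y / partial_deriv (Suc n) (Suc n) H y"

lemma has_deriv_choke:
  assumes p: "p \<in> orthant n" and j: "j \<in> {1..n}"
  shows "((\<lambda>s. choke (p(j := s))) has_real_derivative implicit_slope j (p(Suc n := choke p)))
    (at (p j) within {0..})"
proof -
  let ?F = "at (p j) within {0..}"
  let ?Y = "p(Suc n := choke p)"
  obtain c where c: "(c \<longlongrightarrow> partial_deriv (Suc n) (Suc n) H ?Y) ?F"
    "\<And>s. s \<ge> 0 \<Longrightarrow> H (p(j := s, Suc n := choke (p(j := s)))) - H (p(j := s, Suc n := choke p))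
      = c s * (choke (p(j := s)) - choke p)"
    using mvt_towards_choke[OF smooth_H p j] by blast
  have neg: "partial_deriv (Suc n) (Suc n) H ?Y < 0"
    using H_last_neg orthant_extend[OF p] choke_nonneg p by blast
  have "((\<lambda>s. (H (p(j := s, Suc n := choke p)) - H (p(j := p j, Suc n := choke p))) / (s - p j))
      \<longlongrightarrow> partial_deriv (Suc n) j H ?Y) ?F"
    using has_deriv_coord_at_choke[OF smooth_H p j] unfolding has_field_derivative_iff .
  then have "((\<lambda>s. - (H (p(j := s, Suc n := choke p)) / (s - p j)) / c s) \<longlongrightarrow>
      implicit_slope j ?Y) ?F"
    unfolding implicit_slope_def using H_choke p
    by (intro tendsto_divide tendsto_minus c(1)) (use neg in simp_all)
  moreover have "eventually (\<lambda>s. - (H (p(j := s, Suc n := choke p)) / (s - p j)) / c s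
      = (choke (p(j := s)) - choke (p(j := p j))) / (s - p j)) ?F"
    using order_tendstoD(2)[OF c(1) neg] eventually_at_within_mem[of "{0..}" "p j"]
  proof eventually_elim
    case (elim s)
    have "H (p(j := s, Suc n := choke (p(j := s)))) = 0"
      using H_choke orthant_upd_iff[OF p j] elim(2) by auto
    then have "choke (p(j := s)) - choke p = - H (p(j := s, Suc n := choke p)) / c s"
      using c(2)[of s] elim by (simp add: field_simps)
    then show ?case
      by simp
  qed
  ultimately show ?thesis
    unfolding has_field_derivative_iff using tendsto_cong by force
qed

definition total_partial :: "((nat \<Rightarrow> real) \<Rightarrow> real) \<Rightarrow> nat \<Rightarrow> (nat \<Rightarrow> real) \<Rightarrow> real" where
  "total_partial G j y =
    partial_deriv (Suc n) j G y + partial_deriv (Suc n) (Suc n) G y * implicit_slope j y"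

lemma has_partial_comp_choke:
  assumes G: "smooth_on_orthant (Suc n) G" and p: "p \<in> orthant n" and j: "j \<in> {1..n}"
  shows "has_partial (\<lambda>x. G (x(Suc n := choke x))) j (total_partial G j (p(Suc n := choke p))) p (orthant n)"
proof -
  let ?F = "at (p j) within {0..}"
  let ?Y = "p(Suc n := choke p)"
  obtain c where c: "(c \<longlongrightarrow> partial_deriv (Suc n) (Suc n) G ?Y) ?F"
    "\<And>s. s \<ge> 0 \<Longrightarrow> G (p(j := s, Suc n := choke (p(j := s)))) - G (p(j := s, Suc n := choke p))
      = c s * (choke (p(j := s)) - choke p)"
    using mvt_towards_choke[OF G p j] by blast
  have slope: "((\<lambda>s. (choke (p(j := s)) - choke (p(j := p j))) / (s - p j)) \<longlongrightarrow> implicit_slope j ?Y) ?F"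
    using has_deriv_choke[OF p j] unfolding has_field_derivative_iff .
  have direct: "((\<lambda>s. (G (p(j := s, Suc n := choke p)) - G (p(j := p j, Suc n := choke p))) / (s - p j))
      \<longlongrightarrow> partial_deriv (Suc n) j G ?Y) ?F"
    using has_deriv_coord_at_choke[OF G p j] unfolding has_field_derivative_iff .
  have "((\<lambda>s. c s * ((choke (p(j := s)) - choke (p(j := p j))) / (s - p j)) +
      (G (p(j := s, Suc n := choke p)) - G (p(j := p j, Suc n := choke p))) / (s - p j))
      \<longlongrightarrow> total_partial G j ?Y) ?F"
    using tendsto_add[OF tendsto_mult[OF c(1) slope] direct]
    unfolding total_partial_def by (simp add: add.commute)
  moreover have "eventually (\<lambda>s. c s * ((choke (p(j := s)) - choke (p(j := p j))) / (s - p j)) +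
      (G (p(j := s, Suc n := choke p)) - G (p(j := p j, Suc n := choke p))) / (s - p j)
      = (G (p(j := s, Suc n := choke (p(j := s)))) - G (p(j := p j, Suc n := choke (p(j := p j)))))
        / (s - p j)) ?F"
    using eventually_at_within_mem[of "{0..}" "p j"]
  proof eventually_elim
    case (elim s)
    then show ?case
      using c(2)[of s] by (simp add: add_divide_distrib[symmetric] diff_divide_distrib[symmetric])
  qed
  ultimately have "((\<lambda>s. G (p(j := s, Suc n := choke (p(j := s))))) has_real_derivative
      total_partial G j ?Y) ?F"
    unfolding has_field_derivative_iff using tendsto_cong by force
  then show ?thesis
    unfolding has_partial_orthant_iff[OF p j] by simp
qed

lemma smooth_implicit_slope:
  "j \<in> {1..n} \<Longrightarrow> smooth_on_orthant (Suc n) (implicit_slope j)"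
  unfolding implicit_slope_def[abs_def]
  using smooth_divide[OF smooth_partial_deriv[OF smooth_H last_index] _
      smooth_cmult[OF smooth_partial_deriv[OF smooth_H], of j "- 1"]] H_last_neg
  by force

lemma smooth_total_partial:
  "smooth_on_orthant (Suc n) G \<Longrightarrow> j \<in> {1..n} \<Longrightarrow> smooth_on_orthant (Suc n) (total_partial G j)"
  unfolding total_partial_def[abs_def]
  by (intro smooth_add smooth_mult smooth_partial_deriv smooth_implicit_slope last_index) auto

lemma smooth_comp_choke:
  assumes "smooth_on_orthant (Suc n) G"
  shows "smooth_on_orthant n (\<lambda>x. G (x(Suc n := choke x)))"
proof -
  define P where "P g \<longleftrightarrow> (\<exists>G. smooth_on_orthant (Suc n) G \<and> (\<forall>x\<in>orthant n. g x = G (x(Suc n := choke x))))"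
    for g
  have "partials_closed n P"
    unfolding partials_closed_def
  proof (intro allI impI conjI ballI)
    fix g assume "P g"
    then obtain G where G: "smooth_on_orthant (Suc n) G" "\<forall>x\<in>orthant n. g x = G (x(Suc n := choke x))"
      unfolding P_def by (elim exE conjE)
    show "continuous_on (orthant n) g"
      by (rule continuous_on_eq[OF continuous_on_comp_choke[OF G(1)]]) (use G(2) in auto)
    fix j assume j: "j \<in> {1..n}"
    have "P (\<lambda>x. total_partial G j (x(Suc n := choke x)))"
      unfolding P_def using smooth_total_partial[OF G(1) j] by blast
    moreover have "\<forall>p\<in>orthant n. has_partial g j (total_partial G j (p(Suc n := choke p))) p (orthant n)"
    proof
      fix p assume p: "p \<in> orthant n"
      show "has_partial g j (total_partial G j (p(Suc n := choke p))) p (orthant n)"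
        by (rule has_partial_cong[OF _ p has_partial_comp_choke[OF G(1) p j]]) (use G(2) in simp)
    qed
    ultimately show "\<exists>g'. P g' \<and> (\<forall>p\<in>orthant n. has_partial g j (g' p) p (orthant n))"
      by (intro exI[of _ "\<lambda>x. total_partial G j (x(Suc n := choke x))"] conjI)
  qed
  then show ?thesis
    by (rule smooth_on_orthant_coinduct[of n P]) (use assms P_def in auto)
qed

end

subsection \<open>Passing from n + 1 firms to n firms\<close>

definition smooth_demands :: "(nat \<Rightarrow> nat \<Rightarrow> (nat \<Rightarrow> real) \<Rightarrow> real) \<Rightarrow> nat \<Rightarrow> bool" where
  "smooth_demands D k \<longleftrightarrow> (\<forall>i\<in>{1..k}. smooth_on_orthant k (D k i))"

definition cross_positive :: "(nat \<Rightarrow> nat \<Rightarrow> (nat \<Rightarrow> real) \<Rightarrow> real) \<Rightarrow> nat \<Rightarrow> bool" where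
  "cross_positive D k \<longleftrightarrow> (\<forall>i\<in>{1..k}. \<forall>j\<in>{1..k}. j \<noteq> i \<longrightarrow>
     (\<forall>p\<in>orthant k. \<forall>d. has_partial (D k i) j d p (orthant k) \<longrightarrow> d > 0))"

definition own_negative :: "(nat \<Rightarrow> nat \<Rightarrow> (nat \<Rightarrow> real) \<Rightarrow> real) \<Rightarrow> nat \<Rightarrow> bool" where
  "own_negative D k \<longleftrightarrow> (\<forall>i\<in>{1..k}. \<forall>p\<in>orthant k. \<forall>d.
     has_partial (D k i) i d p (orthant k) \<longrightarrow> d < 0)"

definition exchangeable :: "(nat \<Rightarrow> nat \<Rightarrow> (nat \<Rightarrow> real) \<Rightarrow> real) \<Rightarrow> nat \<Rightarrow> bool" where
  "exchangeable D k \<longleftrightarrow> (\<forall>i\<in>{1..k}. \<forall>j\<in>{1..k}. \<forall>p\<in>orthant k.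
     D k i p = D k j (p(i := p j, j := p i)))"

definition consistent :: "(nat \<Rightarrow> nat \<Rightarrow> (nat \<Rightarrow> real) \<Rightarrow> real) \<Rightarrow> nat \<Rightarrow> bool" where
  "consistent D n \<longleftrightarrow> (\<forall>p\<in>orthant n. \<exists>q\<ge>0. D (Suc n) (Suc n) (p(Suc n := q)) = 0 \<and>
     (\<forall>i\<in>{1..n}. D n i p = D (Suc n) i (p(Suc n := q))))"

lemma cross_positive_partial_deriv:
  assumes "cross_positive D k" "smooth_on_orthant k (D k i)"
    and "i \<in> {1..k}" "j \<in> {1..k}" "j \<noteq> i" "p \<in> orthant k"
  shows "partial_deriv k j (D k i) p > 0"
  using assms has_partial_partial_deriv[OF assms(2,4)] unfolding cross_positive_def by blast

lemma own_negative_partial_deriv: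
  assumes "own_negative D k" "smooth_on_orthant k (D k i)" "i \<in> {1..k}" "p \<in> orthant k"
  shows "partial_deriv k i (D k i) p < 0"
  using assms has_partial_partial_deriv[OF assms(2,3)] unfolding own_negative_def by blast

text \<open>Exchangeability is applied along the transpositions (k i), (i j), (j k), which
  together with the initial swap of i and j compose to the identity.\<close>

lemma exchangeable_swap_other:
  assumes E: "exchangeable D m" and x: "x \<in> orthant m"
    and ijk: "i \<in> {1..m}" "j \<in> {1..m}" "k \<in> {1..m}" and "k \<noteq> i" "k \<noteq> j"
  shows "D m k (x(i := x j, j := x i)) = D m k x"
proof (cases "i = j")
  case False
  define y where "y = x(i := x j, j := x i)"
  define z where "z = y(k := y i, i := y k)"
  define w where "w = z(i := z j, j := z i)"
  have y: "y \<in> orthant m"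
    unfolding y_def by (rule orthant_swap[OF x ijk(1,2)])
  have z: "z \<in> orthant m"
    unfolding z_def by (rule orthant_swap[OF y ijk(3,1)])
  have w: "w \<in> orthant m"
    unfolding w_def by (rule orthant_swap[OF z ijk(1,2)])
  have "D m k y = D m i z"
    unfolding z_def by (rule E[unfolded exchangeable_def, rule_format, OF ijk(3,1) y])
  also have "\<dots> = D m j w"
    unfolding w_def by (rule E[unfolded exchangeable_def, rule_format, OF ijk(1,2) z])
  also have "\<dots> = D m k (w(j := w k, k := w j))"
    by (rule E[unfolded exchangeable_def, rule_format, OF ijk(2,3) w])
  also have "w(j := w k, k := w j) = x"
    unfolding w_def z_def y_def using False assms(6,7) by (auto simp: fun_eq_iff)
  finally show ?thesis
    unfolding y_def .
qed simp

locale demand_step =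
  fixes D :: "nat \<Rightarrow> nat \<Rightarrow> (nat \<Rightarrow> real) \<Rightarrow> real" and n :: nat
  assumes smooth: "smooth_demands D (Suc n)"
    and cross: "cross_positive D (Suc n)"
    and own: "own_negative D (Suc n)"
    and exch: "exchangeable D (Suc n)"
    and cons: "consistent D n"
begin

definition choke :: "(nat \<Rightarrow> real) \<Rightarrow> real" where
  "choke p = (SOME q. q \<ge> 0 \<and> D (Suc n) (Suc n) (p(Suc n := q)) = 0 \<and>
     (\<forall>i\<in>{1..n}. D n i p = D (Suc n) i (p(Suc n := q))))"

lemma choke_spec:
  assumes "p \<in> orthant n"
  shows "choke p \<ge> 0" "D (Suc n) (Suc n) (p(Suc n := choke p)) = 0"
    and "i \<in> {1..n} \<Longrightarrow> D n i p = D (Suc n) i (p(Suc n := choke p))"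
proof -
  have "choke p \<ge> 0 \<and> D (Suc n) (Suc n) (p(Suc n := choke p)) = 0 \<and>
      (\<forall>i\<in>{1..n}. D n i p = D (Suc n) i (p(Suc n := choke p)))"
    unfolding choke_def by (rule someI_ex) (use cons assms in \<open>auto simp: consistent_def\<close>)
  then show "choke p \<ge> 0" "D (Suc n) (Suc n) (p(Suc n := choke p)) = 0"
    and "i \<in> {1..n} \<Longrightarrow> D n i p = D (Suc n) i (p(Suc n := choke p))"
    by simp_all
qed

lemma smooth_D: "i \<in> {1..Suc n} \<Longrightarrow> smooth_on_orthant (Suc n) (D (Suc n) i)"
  using smooth unfolding smooth_demands_def by blast

sublocale choke_price n "D (Suc n) (Suc n)" choke
  using smooth_D[OF last_index] own_negative_partial_deriv[OF own smooth_D[OF last_index] last_index]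
    choke_spec by unfold_locales auto

lemma D_eq_comp_choke: "i \<in> {1..n} \<Longrightarrow> \<forall>x\<in>orthant n. D (Suc n) i (x(Suc n := choke x)) = D n i x"
  using choke_spec(3) by simp

lemma smooth_demands_below: "smooth_demands D n"
  unfolding smooth_demands_def
  using smooth_on_orthant_cong[OF smooth_comp_choke[OF smooth_D] D_eq_comp_choke] by simp

text \<open>By the implicit function theorem the j-th partial of the lower-level demand is
  G_j + G_{n+1} (- H_j / H_{n+1}) with G = D^{n+1}_i and H = D^{n+1}_{n+1}; each term
  is positive by the signs at level n + 1.\<close>

lemma cross_positive_below: "cross_positive D n"
  unfolding cross_positive_def
proof (intro ballI impI allI)
  fix i j p d
  assume i: "i \<in> {1..n}" and j: "j \<in> {1..n}" and "j \<noteq> i" and p: "p \<in> orthant n"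
    and d: "has_partial (D n i) j d p (orthant n)"
  let ?Y = "p(Suc n := choke p)"
  have Y: "?Y \<in> orthant (Suc n)"
    using orthant_extend p choke_spec(1) by blast
  have i': "i \<in> {1..Suc n}" and j': "j \<in> {1..Suc n}"
    using i j by auto
  have pos: "partial_deriv (Suc n) b (D (Suc n) a) ?Y > 0"
    if "a \<in> {1..Suc n}" "b \<in> {1..Suc n}" "b \<noteq> a" for a b
    using cross_positive_partial_deriv[OF cross smooth_D[OF that(1)] that Y] .
  have "has_partial (\<lambda>x. D (Suc n) i (x(Suc n := choke x))) j d p (orthant n)"
    by (rule has_partial_cong[OF _ p d]) (use D_eq_comp_choke[OF i] in simp)
  then have "d = total_partial (D (Suc n) i) j ?Y"
    using has_partial_orthant_unique[OF p j _ has_partial_comp_choke[OF smooth_D[OF i'] p j]] by simp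
  moreover have "partial_deriv (Suc n) j (D (Suc n) i) ?Y > 0"
    using pos[OF i' j'] \<open>j \<noteq> i\<close> by simp
  moreover have "partial_deriv (Suc n) (Suc n) (D (Suc n) i) ?Y > 0"
    using pos[OF i' last_index] i by simp
  moreover have "implicit_slope j ?Y > 0"
    unfolding implicit_slope_def
    using pos[OF last_index j'] j own_negative_partial_deriv[OF own smooth_D last_index Y]
    by (simp add: divide_pos_neg)
  ultimately show "d > 0"
    unfolding total_partial_def by (simp add: add_pos_pos)
qed

lemma exchangeable_below: "exchangeable D n"
  unfolding exchangeable_def
proof (intro ballI)
  fix i j p assume i: "i \<in> {1..n}" and j: "j \<in> {1..n}" and p: "p \<in> orthant n"
  define p' where "p' = p(i := p j, j := p i)"
  have p': "p' \<in> orthant n"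
    unfolding p'_def by (rule orthant_swap[OF p i j])
  have i': "i \<in> {1..Suc n}" and j': "j \<in> {1..Suc n}"
    using i j by auto
  have Y: "p(Suc n := choke p) \<in> orthant (Suc n)"
    using orthant_extend p choke_spec(1) by blast
  have swap: "(p(Suc n := choke p))(i := p j, j := p i) = p'(Suc n := choke p)"
    unfolding p'_def using i j by (auto simp: fun_eq_iff)
  have "D (Suc n) (Suc n) (p'(Suc n := choke p)) = 0"
    using exchangeable_swap_other[OF exch Y i' j' last_index] i j swap choke_spec(2)[OF p] by simp
  then have same_choke: "choke p' = choke p"
    using choke_unique[OF p'] choke_spec(1)[OF p] by simp
  have "D n i p = D (Suc n) i (p(Suc n := choke p))"
    using choke_spec(3)[OF p i] .
  also have "\<dots> = D (Suc n) j (p'(Suc n := choke p'))"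
    using exch[unfolded exchangeable_def, rule_format, OF i' j' Y] i j swap same_choke by simp
  also have "\<dots> = D n j p'"
    using choke_spec(3)[OF p' j] by simp
  finally show "D n i p = D n j (p(i := p j, j := p i))"
    unfolding p'_def .
qed

end

lemma demand_levels_downward:
  fixes D :: "nat \<Rightarrow> nat \<Rightarrow> (nat \<Rightarrow> real) \<Rightarrow> real"
  assumes "smooth_demands D N" "cross_positive D N" "exchangeable D N"
    and own: "\<forall>k\<in>{1..N}. own_negative D k" and cons: "\<forall>k\<in>{1..N-1}. consistent D k"
    and "n \<in> {1..N}"
  shows "smooth_demands D n \<and> cross_positive D n \<and> exchangeable D n"
proof -
  have "n \<le> N"
    using assms(6) by simp
  then show ?thesis
  proof (induction n rule: inc_induct)
    case base
    show ?case
      using assms(1-3) by (intro conjI)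
  next
    case (step k)
    show ?case
    proof (cases "k = 0")
      case False
      then have "k \<in> {1..N-1}" "Suc k \<in> {1..N}"
        using step.hyps by auto
      then interpret demand_step D k
        using step.IH own cons by unfold_locales blast+
      show ?thesis
        using smooth_demands_below cross_positive_below exchangeable_below by (intro conjI)
    qed (simp add: smooth_demands_def cross_positive_def exchangeable_def)
  qed
qed

lemma demands_ordered:
  fixes D :: "nat \<Rightarrow> nat \<Rightarrow> (nat \<Rightarrow> real) \<Rightarrow> real"
  assumes S: "smooth_demands D k" and C: "cross_positive D k" and O: "own_negative D k"
    and E: "exchangeable D k" and q: "q \<in> orthant k" and i: "1 \<le> i" "i < k"
    and le: "q i \<le> q (i + 1)"
  shows "D k (i + 1) q \<le> D k i q"
proof -
  have ik: "i \<in> {1..k}" "i + 1 \<in> {1..k}"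
    using i by auto
  have G: "smooth_on_orthant k (D k i)"
    using S ik unfolding smooth_demands_def by blast
  define q' where "q' = q(i := q (i + 1))"
  have q': "q' \<in> orthant k"
    unfolding q'_def using orthant_upd_iff[OF q ik(1)] orthant_nonneg[OF q ik(2)] by blast
  have swap: "q(i + 1 := q i, i := q (i + 1)) = q'(i + 1 := q i)"
    and unswap: "q'(i + 1 := q (i + 1)) = q(i := q (i + 1))"
    unfolding q'_def by (auto simp: fun_eq_iff)
  have "D k (i + 1) q = D k i (q(i + 1 := q i, i := q (i + 1)))"
    using E[unfolded exchangeable_def, rule_format, OF ik(2) ik(1) q] by simp
  also have "\<dots> = D k i (q'(i + 1 := q i))"
    by (simp only: swap)
  also have "\<dots> \<le> D k i (q'(i + 1 := q (i + 1)))"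
  proof (rule orthant_coord_mono[OF q' ik(2) has_partial_partial_deriv[OF G ik(2)] _ orthant_nonneg[OF q ik(1)] le])
    show "\<forall>x\<in>orthant k. partial_deriv k (i + 1) (D k i) x > 0"
      using cross_positive_partial_deriv[OF C G ik(1) ik(2)] by simp
  qed
  also have "\<dots> = D k i (q(i := q (i + 1)))"
    by (simp only: unswap)
  also have "\<dots> \<le> D k i (q(i := q i))"
  proof (cases "q i = q (i + 1)")
    case False
    then have "q i < q (i + 1)"
      using le by simp
    have "D k i (q(i := q (i + 1))) < D k i (q(i := q i))"
      by (rule orthant_coord_strict_antimono[OF q ik(1) has_partial_partial_deriv[OF G ik(1)] _
          orthant_nonneg[OF q ik(1)] \<open>q i < q (i + 1)\<close>])
        (use own_negative_partial_deriv[OF O G ik(1)] in blast)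
    then show ?thesis
      by simp
  qed simp
  finally show ?thesis
    by simp
qed

theorem proposition2p3:
  fixes N :: nat and D :: "nat \<Rightarrow> nat \<Rightarrow> (nat \<Rightarrow> real) \<Rightarrow> real"
  assumes N2: "N \<ge> 2"
    \<comment> \<open>(A1)\<close>
    and A1_smooth: "\<forall>i\<in>{1..N}. smooth_on_orthant N (D N i)"
    and A1_zero: "D N N (\<lambda>_. 0) > 0"
    and A1_own: "\<forall>i\<in>{1..N}. \<forall>p\<in>orthant N. \<forall>d.
                   has_partial (D N i) i d p (orthant N) \<longrightarrow> d < 0"
    and A1_cross: "\<forall>i\<in>{1..N}. \<forall>j\<in>{1..N}. j \<noteq> i \<longrightarrow> (\<forall>p\<in>orthant N. \<forall>d.
                   has_partial (D N i) j d p (orthant N) \<longrightarrow> d > 0)"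
    \<comment> \<open>(A2)\<close>
    and A2: "\<forall>i\<in>{1..N}. \<forall>j\<in>{1..N}. \<forall>p\<in>orthant N.
               D N i p = D N j (p(i := p j, j := p i))"
    \<comment> \<open>(A3)\<close>
    and A3: "\<forall>i\<in>{1..N}. \<forall>p\<in>orthant N. \<exists>q\<ge>0. D N i (p(i := q)) = 0"
    \<comment> \<open>consistency recursion\<close>
    and rec: "\<forall>n\<in>{1..N-1}. \<forall>p\<in>orthant n. \<exists>q\<ge>0.
               D (n+1) (n+1) (p(n+1 := q)) = 0 \<and>
               (\<forall>i\<in>{1..n}. D n i p = D (n+1) i (p(n+1 := q)))"
    \<comment> \<open>(A4)\<close>
    and A4: "\<forall>n\<in>{1..N-1}. \<forall>i\<in>{1..n}. \<forall>p\<in>orthant n. \<forall>d.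
               has_partial (D n i) i d p (orthant n) \<longrightarrow> d < 0"
  shows "(\<forall>n\<in>{1..N-1}. \<forall>i\<in>{1..n}.
            smooth_on_orthant n (D n i) \<and>
            (\<forall>j\<in>{1..n}. j \<noteq> i \<longrightarrow> (\<forall>p\<in>orthant n. \<forall>d.
               has_partial (D n i) j d p (orthant n) \<longrightarrow> d > 0)))
       \<and> (\<forall>n\<in>{1..N-1}. \<forall>i\<in>{1..n}. \<forall>j\<in>{1..n}. \<forall>p\<in>orthant n.
            D n i p = D n j (p(i := p j, j := p i)))
       \<and> (\<forall>p\<in>orthant N. (\<forall>i j. 1 \<le> i \<longrightarrow> i \<le> j \<longrightarrow> j \<le> N \<longrightarrow> p i \<le> p j) \<longrightarrow>
            (\<forall>n\<in>{1..N}. \<forall>i. 1 \<le> i \<longrightarrow> i < n \<longrightarrow>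
               D n i (restr n p) \<ge> D n (i+1) (restr n p)))"
proof -
  have own: "own_negative D n" if "n \<in> {1..N}" for n
  proof (cases "n = N")
    case True
    then show ?thesis
      using A1_own unfolding own_negative_def by simp
  next
    case False
    then have "n \<in> {1..N-1}"
      using that by auto
    then show ?thesis
      using A4 unfolding own_negative_def by blast
  qed
  have levels: "smooth_demands D n \<and> cross_positive D n \<and> exchangeable D n" if "n \<in> {1..N}" for n
  proof (rule demand_levels_downward[OF _ _ _ _ _ that])
    show "smooth_demands D N" "cross_positive D N" "exchangeable D N"
      unfolding smooth_demands_def cross_positive_def exchangeable_def using A1_smooth A1_cross A2 by auto
    show "\<forall>k\<in>{1..N}. own_negative D k" "\<forall>k\<in>{1..N-1}. consistent D k"
      using own rec unfolding consistent_def by simp_all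
  qed
  have ordered: "D n (i + 1) (restr n p) \<le> D n i (restr n p)"
    if p: "p \<in> orthant N" and sorted: "\<forall>i j. 1 \<le> i \<longrightarrow> i \<le> j \<longrightarrow> j \<le> N \<longrightarrow> p i \<le> p j"
      and n: "n \<in> {1..N}" and i: "1 \<le> i" "i < n" for p n i
  proof (rule demands_ordered[OF _ _ own[OF n] _ restr_in_orthant[OF p] i])
    show "smooth_demands D n" "cross_positive D n" "exchangeable D n"
      using levels[OF n] by simp_all
    show "restr n p i \<le> restr n p (i + 1)"
      using sorted i n unfolding restr_def by simp
  qed
  have below_N: "n \<in> {1..N}" if "n \<in> {1..N-1}" for n
    using that by auto
  show ?thesis
    using levels[OF below_N] ordered
    unfolding smooth_demands_def cross_positive_def exchangeable_def by blast
qed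

end
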